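(* Let $n\geq 6$ be an integer. Then for every real $x\in[3,n/2]$, $$n\frac{\sin(\pi x/n)}{\sin(\pi/n)}\geq x(n-x)+1.$$ *)

theory Defs
  imports Complex_Main
begin

end

theory Submission
  imports Defs "HOL-Analysis.Complex_Transcendental"
begin

text \<open>
  Put \<open>y = \<pi> x / n\<close>. Bounding \<open>sin y \<ge> y - y\<^sup>3 / 6\<close> from below and
  \<open>sin (\<pi> / n) \<le> \<pi> / n\<close> from above gives
  \<open>n sin (\<pi> x / n) / sin (\<pi> / n) \<ge> n x - \<pi>\<^sup>2 x\<^sup>3 / (6 n)\<close>, and the claim
  reduces to \<open>\<pi>\<^sup>2 x\<^sup>3 / (6 n) \<le> x\<^sup>2 - 1\<close>. Since \<open>x \<le> n / 2\<close> the left-hand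
  side is at most \<open>\<pi>\<^sup>2 x\<^sup>2 / 12 < 5 x\<^sup>2 / 6\<close>, and \<open>x\<^sup>2 / 6 \<ge> 1\<close> for \<open>x \<ge> 3\<close>.
\<close>

lemma sin_ge_cubic:
  fixes y :: real
  shows "y - \<bar>y\<bar> ^ 3 / 6 \<le> sin y"
proof -
  have "\<bar>sin y - (\<Sum>m<3. sin_coeff m * y ^ m)\<bar> \<le> inverse (fact 3) * \<bar>y\<bar> ^ 3"
    by (rule Maclaurin_sin_bound)
  moreover have "(\<Sum>m<3. sin_coeff m * y ^ m) = y"
    by (simp add: eval_nat_numeral sin_coeff_def)
  moreover have "(fact 3 :: real) = 6"
    by (simp add: eval_nat_numeral)
  ultimately have "\<bar>sin y - y\<bar> \<le> \<bar>y\<bar> ^ 3 / 6"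
    by simp
  then show ?thesis
    by linarith
qed

lemma sin_ratio_ge:
  fixes N x :: real
  assumes "1 < N" and "0 \<le> x" and "x \<le> N"
  shows "N * x - pi\<^sup>2 * x ^ 3 / (6 * N) \<le> N * (sin (pi * x / N) / sin (pi / N))"
    (is "?L \<le> _")
proof -
  define y where "y = pi * x / N"
  define s where "s = sin (pi / N)"
  have s_pos: "0 < s"
    unfolding s_def using assms(1) by (intro sin_gt_zero) (auto simp: field_simps)
  have s_le: "s \<le> pi / N"
    unfolding s_def using sin_x_le_x[of "pi / N"] assms(1) by simp
  have sin_y_nonneg: "0 \<le> sin y"
    unfolding y_def using assms by (intro sin_ge_zero) (auto simp: field_simps)
  show ?thesis
  proof (cases "?L \<le> 0")
    case True
    have "0 \<le> N * (sin y / s)"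
      using sin_y_nonneg s_pos assms(1) by simp
    with True show ?thesis
      by (simp add: y_def s_def)
  next
    case False
    have "?L * s \<le> ?L * (pi / N)"
      using False s_le by (intro mult_left_mono) auto
    also have "\<dots> = N * (y - y ^ 3 / 6)"
      unfolding y_def using assms(1) by (simp add: field_simps power2_eq_square power3_eq_cube)
    also have "\<dots> \<le> N * sin y"
      using sin_ge_cubic[of y] assms by (simp add: y_def)
    finally show ?thesis
      using s_pos by (simp add: y_def s_def field_simps)
  qed
qed

lemma cubic_correction_le:
  fixes N x :: real
  assumes "3 \<le> x" and "2 * x \<le> N"
  shows "x * (N - x) + 1 \<le> N * x - pi\<^sup>2 * x ^ 3 / (6 * N)"
proof -
  have "pi\<^sup>2 \<le> 3.16\<^sup>2"
    using pi_approx pi_ge_zero by (intro power_mono) auto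
  then have pi_sq: "pi\<^sup>2 \<le> 10"
    by (simp add: power2_eq_square)
  have "x / N \<le> 1 / 2"
    using assms by (simp add: field_simps)
  have "pi\<^sup>2 * x ^ 3 / (6 * N) = pi\<^sup>2 * x\<^sup>2 * (x / N) / 6"
    by (simp add: power2_eq_square power3_eq_cube)
  also have "\<dots> \<le> pi\<^sup>2 * x\<^sup>2 * (1 / 2) / 6"
    using \<open>x / N \<le> 1 / 2\<close> by (intro divide_right_mono mult_left_mono) auto
  also have "\<dots> \<le> 10 * x\<^sup>2 / 12"
    using mult_right_mono[OF pi_sq, of "x\<^sup>2"] by simp
  also have "\<dots> \<le> x\<^sup>2 - 1"
    using power_mono[of 3 x 2] assms(1) by simp
  finally show ?thesis
    by (simp add: algebra_simps power2_eq_square)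
qed

theorem lemma5p1:
  fixes n :: nat and x :: real
  assumes "n \<ge> 6" and "3 \<le> x" and "x \<le> real n / 2"
  shows "real n * (sin (pi * x / real n) / sin (pi / real n)) \<ge> x * (real n - x) + 1"
proof -
  have "x * (real n - x) + 1 \<le> real n * x - pi\<^sup>2 * x ^ 3 / (6 * real n)"
    using assms(2,3) by (intro cubic_correction_le) auto
  also have "\<dots> \<le> real n * (sin (pi * x / real n) / sin (pi / real n))"
    using assms by (intro sin_ratio_ge) auto
  finally show ?thesis .
qed

end
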